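(* Let $G$ be a connected graph and let $H$ be obtained from $G$ by a $Q$-switching with switching set $X$. If the neighborhood graph $G_X$ is a disjoint union of cycles, then $H$ is isomorphic to $G$.
   Context: Graphs are finite and simple. $Q$ is a $k\times k$ real orthogonal matrix with no integral rows. $H$ is obtained from $G$ by a $Q$-switching with switching set $X$ ($|X|=k$) if $H$ has the same vertex set $V$ and, after ordering vertices with $X$ first, $A_H=M^TA_GM$ with $M=\operatorname{diag}(Q,-I_a,I_b)$ block diagonal, $a+b=|V|-k$. The neighborhood graph $G_X$ has vertex set $X\cup N(X)$, where $N(X)$ is the set of vertices adjacent to some vertex of $X$, and edge set the edges of $G$ with at least one endpoint in $X$. *)

theory Defs
  imports "HOL-Analysis.Analysis" "HOL-Library.Disjoint_Sets"
begin

definition simple_graph :: "('v \<Rightarrow> 'v \<Rightarrow> bool) \<Rightarrow> bool" where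
  "simple_graph E \<longleftrightarrow> (\<forall>x y. E x y = E y x) \<and> (\<forall>x. \<not> E x x)"

definition connected_graph :: "('v \<Rightarrow> 'v \<Rightarrow> bool) \<Rightarrow> bool" where
  "connected_graph E \<longleftrightarrow> (\<forall>u v. (u, v) \<in> {(x, y). E x y}\<^sup>*)"

definition adj_mat :: "('v::finite \<Rightarrow> 'v \<Rightarrow> bool) \<Rightarrow> real^'v^'v" where
  "adj_mat E = (\<chi> i j. if E i j then 1 else 0)"

text \<open>H is obtained from G by a Q-switching with switching set X:
  A_H = M^T A_G M where, in the coordinates indexed by the vertices,
  M restricted to X x X is a real orthogonal matrix Q with no integral rows,
  M is zero between X and V - X, and M restricted to V - X is diagonal
  with entries -1 or 1 (i.e. diag(-I_a, I_b) after reordering).\<close>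
definition q_switching ::
  "('v::finite \<Rightarrow> 'v \<Rightarrow> bool) \<Rightarrow> 'v set \<Rightarrow> ('v \<Rightarrow> 'v \<Rightarrow> bool) \<Rightarrow> bool" where
  "q_switching G X H \<longleftrightarrow> simple_graph G \<and> simple_graph H \<and>
     (\<exists>M :: real^'v^'v.
        (\<forall>i j. (i \<in> X \<and> j \<notin> X) \<or> (i \<notin> X \<and> j \<in> X) \<longrightarrow> M $ i $ j = 0) \<and>
        (\<forall>i j. i \<notin> X \<and> j \<notin> X \<and> i \<noteq> j \<longrightarrow> M $ i $ j = 0) \<and>
        (\<forall>i. i \<notin> X \<longrightarrow> M $ i $ i = 1 \<or> M $ i $ i = -1) \<and>
        (\<forall>i\<in>X. \<forall>j\<in>X. (\<Sum>k\<in>X. M $ k $ i * M $ k $ j) = (if i = j then 1 else 0)) \<and>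
        (\<forall>i\<in>X. \<exists>j\<in>X. M $ i $ j \<notin> \<int>) \<and>
        adj_mat H = transpose M ** adj_mat G ** M)"

definition nbhd_vertices :: "('v \<Rightarrow> 'v \<Rightarrow> bool) \<Rightarrow> 'v set \<Rightarrow> 'v set" where
  "nbhd_vertices G X = X \<union> {v. \<exists>x\<in>X. G x v}"

definition nbhd_edges :: "('v \<Rightarrow> 'v \<Rightarrow> bool) \<Rightarrow> 'v set \<Rightarrow> 'v \<Rightarrow> 'v \<Rightarrow> bool" where
  "nbhd_edges G X u v \<longleftrightarrow> G u v \<and> (u \<in> X \<or> v \<in> X)"

definition is_cycle_on :: "'v set \<Rightarrow> ('v \<Rightarrow> 'v \<Rightarrow> bool) \<Rightarrow> bool" where
  "is_cycle_on C E \<longleftrightarrow> (\<exists>n f. n \<ge> 3 \<and> bij_betw f {0..<n} C \<and>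
     (\<forall>i<n. \<forall>j<n. E (f i) (f j) \<longleftrightarrow> (j = Suc i mod n \<or> i = Suc j mod n)))"

text \<open>The graph (V, E) (E only relating vertices of V) is a disjoint union of cycles.\<close>
definition disjoint_union_of_cycles :: "'v set \<Rightarrow> ('v \<Rightarrow> 'v \<Rightarrow> bool) \<Rightarrow> bool" where
  "disjoint_union_of_cycles V E \<longleftrightarrow> (\<exists>P. partition_on V P \<and>
     (\<forall>C\<in>P. is_cycle_on C E) \<and>
     (\<forall>C\<in>P. \<forall>D\<in>P. C \<noteq> D \<longrightarrow> (\<forall>x\<in>C. \<forall>y\<in>D. \<not> E x y)))"

definition graph_iso :: "('v \<Rightarrow> 'v \<Rightarrow> bool) \<Rightarrow> ('v \<Rightarrow> 'v \<Rightarrow> bool) \<Rightarrow> bool" where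
  "graph_iso G H \<longleftrightarrow> (\<exists>f. bij f \<and> (\<forall>u v. G u v \<longleftrightarrow> H (f u) (f v)))"

end

(*
  Write S = X \<union> N(X) and G_X, H_X for the neighbourhood graphs. Congruence by
  M = diag(Q, +-1) multiplies an entry of A(G) outside X by a product of two signs, which must be 1
  on edges since A(H) is a 0/1 matrix; so G and H agree outside X and A(H_X) = M^T A(G_X) M.
  As G_X is 2-regular on S, H_X has as many edges, and then the indicator vector of S attains the
  top eigenvalue 2 of A(H_X): H_X is 2-regular on S as well.

  For a cycle, the (u, v) entry of V_k(A) = 2 T_k(A/2) counts how many of the two non-backtracking
  walks of length k from u end in v. V_k commutes with orthogonal congruence and M is +-1 on the
  diagonal outside X, so these counts agree in G_X and H_X for u, v outside X. Hence the cycle of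
  H_X through a vertex outside X has the length of the cycle of G_X through it and, after possibly
  reversing it, visits the vertices outside X in the same positions; distinct cycles of G_X give
  disjoint cycles of H_X. Matching every cycle of G_X with its partner is an isomorphism
  G_X -> H_X fixing all vertices outside X, hence an isomorphism G -> H. If a cycle of G_X lies
  inside X, connectivity makes it all of G, and comparing traces of V_k shows that H is a cycle of
  the same length.
*)
theory Submission
  imports Defs
begin

section \<open>Adjacency matrices and orthogonal congruence\<close>

lemma matrix_add_rdistrib: "((A :: 'a::semiring_1^'n^'m) + B) ** C = A ** C + B ** C"
  by (simp add: vec_eq_iff matrix_matrix_mult_def distrib_right sum.distrib)

lemma matrix_diff_ldistrib: "(A :: 'a::ring_1^'n^'m) ** (B - C) = A ** B - A ** C"
  by (simp add: vec_eq_iff matrix_matrix_mult_def right_diff_distrib sum_subtractf)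

lemma matrix_diff_rdistrib: "((A :: 'a::ring_1^'n^'m) - B) ** C = A ** C - B ** C"
  by (simp add: vec_eq_iff matrix_matrix_mult_def left_diff_distrib sum_subtractf)

lemma trace_orthogonal_conj:
  fixes M B :: "'a::comm_ring_1^'n^'n"
  assumes "orthogonal_matrix M"
  shows "trace (transpose M ** B ** M) = trace B"
proof -
  have "trace (transpose M ** B ** M) = trace (M ** (transpose M ** B))"
    by (rule trace_mul_sym)
  also have "\<dots> = trace B"
    using assms by (simp add: matrix_mul_assoc orthogonal_matrix_def)
  finally show ?thesis .
qed

lemma inner_congruence:
  fixes M B :: "real^'n^'n"
  shows "x \<bullet> ((transpose M ** B ** M) *v x) = (M *v x) \<bullet> (B *v (M *v x))"
  by (metis dot_lmul_matrix matrix_mul_assoc matrix_vector_mul_assoc vector_transpose_matrix)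

lemma adj_mat_entry: "adj_mat E $ u $ v = of_bool (E u v)"
  by (simp add: adj_mat_def)

lemma adj_mat_mult_vec: "(adj_mat E *v x) $ u = (\<Sum>v | E u v. x $ v)"
  by (simp add: matrix_vector_mult_def adj_mat_entry)

lemma trace_adj_mat_square:
  assumes "\<And>u v. E u v \<longleftrightarrow> E v u"
  shows "trace (adj_mat E ** adj_mat E) = (\<Sum>u\<in>UNIV. real (card {v. E u v}))"
  using assms by (simp add: trace_def matrix_matrix_mult_def adj_mat_def if_distrib sum.If_cases
      cong: if_cong)

lemma adj_mat_mult_indicator:
  assumes "\<And>u v. E u v \<Longrightarrow> u \<in> S \<and> v \<in> S"
  shows "(adj_mat E *v (\<chi> u. of_bool (u \<in> S))) $ u = real (card {v. E u v})"
  using assms by (simp add: adj_mat_mult_vec)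

text \<open>\<open>vieta_lucas k A\<close> is \<open>2 T\<^sub>k(A/2)\<close> for the Chebyshev polynomial \<open>T\<^sub>k\<close>. For the adjacency
  matrix of a cycle its \<open>(u, v)\<close> entry counts how many of the two non-backtracking walks of
  length \<open>k\<close> from \<open>u\<close> end in \<open>v\<close>.\<close>
fun vieta_lucas :: "nat \<Rightarrow> 'a::comm_ring_1^'n^'n \<Rightarrow> 'a^'n^'n" where
  "vieta_lucas 0 A = mat 2"
| "vieta_lucas (Suc 0) A = A"
| "vieta_lucas (Suc (Suc k)) A = vieta_lucas (Suc k) A ** A - vieta_lucas k A"

lemma vieta_lucas_orthogonal_conj:
  fixes M A :: "'a::comm_ring_1^'n^'n"
  assumes "orthogonal_matrix M"
  shows "vieta_lucas k (transpose M ** A ** M) = transpose M ** vieta_lucas k A ** M"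
proof (induction k A rule: vieta_lucas.induct)
  case (1 A)
  have two: "mat 2 = mat 1 + (mat 1 :: 'a^'n^'n)"
    by (simp add: vec_eq_iff mat_def)
  have "transpose M ** (mat 1 + mat 1) ** M = (mat 1 + mat 1 :: 'a^'n^'n)"
    using assms unfolding orthogonal_matrix_def
    by (simp only: matrix_add_ldistrib matrix_add_rdistrib matrix_mul_rid)
  then show ?case
    by (simp only: two vieta_lucas.simps)
next
  case (3 k A)
  have "vieta_lucas (Suc k) (transpose M ** A ** M) ** (transpose M ** A ** M)
      = transpose M ** vieta_lucas (Suc k) A ** (M ** transpose M) ** A ** M"
    using 3 by (simp add: matrix_mul_assoc)
  also have "\<dots> = transpose M ** (vieta_lucas (Suc k) A ** A) ** M"
    using assms by (simp add: matrix_mul_assoc orthogonal_matrix_def)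
  finally show ?case
    using 3 by (simp add: matrix_diff_ldistrib matrix_diff_rdistrib)
qed simp

section \<open>Cycle labellings\<close>

text \<open>Since \<open>c i\<close> has no
  neighbours besides \<open>c (i \<plusminus> 1)\<close>, the cycle is a whole connected component of \<open>E\<close>.\<close>
definition cycle_labelling :: "('v \<Rightarrow> 'v \<Rightarrow> bool) \<Rightarrow> nat \<Rightarrow> (int \<Rightarrow> 'v) \<Rightarrow> bool" where
  "cycle_labelling E n c \<longleftrightarrow> 3 \<le> n \<and> (\<forall>i j. c i = c j \<longleftrightarrow> int n dvd i - j) \<and>
     (\<forall>i. {u. E (c i) u} = {c (i + 1), c (i - 1)})"

context
  fixes E :: "'v \<Rightarrow> 'v \<Rightarrow> bool" and n :: nat and c :: "int \<Rightarrow> 'v"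
  assumes lab: "cycle_labelling E n c"
begin

lemma cycle_labelling_length: "3 \<le> n"
  using lab by (simp add: cycle_labelling_def)

lemma cycle_labelling_eq_iff: "c i = c j \<longleftrightarrow> int n dvd i - j"
  using lab by (simp add: cycle_labelling_def)

lemma cycle_labelling_adj: "E (c i) u \<longleftrightarrow> u = c (i + 1) \<or> u = c (i - 1)"
  using lab by (auto simp: cycle_labelling_def set_eq_iff)

lemma cycle_labelling_neighbours_distinct: "c (i + 1) \<noteq> c (i - 1)"
proof
  assume "c (i + 1) = c (i - 1)"
  then have "int n dvd 2"
    by (simp add: cycle_labelling_eq_iff)
  then show False
    using cycle_labelling_length by (auto dest: zdvd_imp_le)
qed

lemma cycle_labelling_shift: "cycle_labelling E n (\<lambda>i. c (a + i))"
  using lab by (simp add: cycle_labelling_def algebra_simps)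

lemma cycle_labelling_reflect: "cycle_labelling E n (\<lambda>i. c (- i))"
  unfolding cycle_labelling_def
proof (intro conjI allI)
  fix i j
  show "c (- i) = c (- j) \<longleftrightarrow> int n dvd i - j"
    by (simp add: cycle_labelling_eq_iff dvd_diff_commute)
  have "{u. E (c (- i)) u} = {c (- i + 1), c (- i - 1)}"
    using lab by (simp add: cycle_labelling_def)
  moreover have "- (i + 1) = - i - 1" "- (i - 1) = - i + 1"
    by simp_all
  ultimately show "{u. E (c (- i)) u} = {c (- (i + 1)), c (- (i - 1))}"
    by (simp only: insert_commute)
qed (rule cycle_labelling_length)

lemma cycle_labelling_mod: "c (a + t mod int n) = c (a + t)" "c (a - t mod int n) = c (a - t)"
proof -
  have "(a + t mod int n) mod int n = (a + t) mod int n"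
    "(a - t mod int n) mod int n = (a - t) mod int n"
    by (simp_all add: mod_add_right_eq mod_diff_right_eq)
  then show "c (a + t mod int n) = c (a + t)" "c (a - t mod int n) = c (a - t)"
    by (simp_all add: cycle_labelling_eq_iff mod_eq_dvd_iff)
qed

lemma range_cycle_labelling: "range c = c ` {0..<int n}"
proof (intro equalityI subsetI)
  fix v assume "v \<in> range c"
  then obtain i where "v = c i" by blast
  moreover have "c i = c (i mod int n)"
    by (simp add: cycle_labelling_eq_iff mod_eq_dvd_iff[symmetric])
  moreover have "i mod int n \<in> {0..<int n}"
    using cycle_labelling_length by simp
  ultimately show "v \<in> c ` {0..<int n}" by blast
qed auto

lemma card_range_cycle_labelling: "card (range c) = n"
proof -
  have "inj_on c {0..<int n}"
    by (auto simp: inj_on_def cycle_labelling_eq_iff mod_eq_dvd_iff[symmetric])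
  then show ?thesis
    by (simp add: range_cycle_labelling card_image)
qed

end

lemma cycle_labelling_range_subset:
  assumes c: "cycle_labelling E n c" and d: "cycle_labelling E m d" and "c i = d j"
  shows "range d \<subseteq> range c"
proof -
  have walk: "d (j + t) \<in> range c" for t
  proof (induction t rule: int_induct[where k = 0])
    case base
    then show ?case using \<open>c i = d j\<close> by (metis add_0_right rangeI)
  next
    case (step1 t)
    then obtain a where "d (j + t) = c a" by blast
    then have "E (c a) (d (j + t + 1))"
      using cycle_labelling_adj[OF d] by metis
    then show ?case
      using cycle_labelling_adj[OF c] by (auto simp: add.assoc)
  next
    case (step2 t)
    then obtain a where "d (j + t) = c a" by blast
    then have "E (c a) (d (j + t - 1))"
      using cycle_labelling_adj[OF d] by metis
    then show ?case
      using cycle_labelling_adj[OF c] by (auto simp: add_diff_eq)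
  qed
  have "d k \<in> range c" for k
    using walk[of "k - j"] by simp
  then show ?thesis
    by blast
qed

lemma cycle_labelling_ranges_eq:
  assumes "cycle_labelling E n c" "cycle_labelling E m d" "c i = d j"
  shows "range c = range d"
  using cycle_labelling_range_subset assms by (metis subset_antisym)

lemma adj_mat_cycle_labelling:
  assumes "cycle_labelling E n c"
  shows "adj_mat E $ c i $ u = of_bool (c (i + 1) = u) + of_bool (c (i - 1) = u)"
  using cycle_labelling_neighbours_distinct[OF assms, of i]
  by (auto simp: adj_mat_entry cycle_labelling_adj[OF assms])

lemma vieta_lucas_adj_cycle_labelling:
  assumes lab: "cycle_labelling E n c"
  shows "vieta_lucas k (adj_mat E) $ c a $ u
    = of_bool (c (a + int k) = u) + of_bool (c (a - int k) = u)"
proof (induction k arbitrary: u rule: induct_nat_012)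
  case 0
  then show ?case by (simp add: mat_def)
next
  case 1
  then show ?case by (simp add: adj_mat_cycle_labelling[OF lab])
next
  case (ge2 k)
  have "(vieta_lucas (Suc k) (adj_mat E) ** adj_mat E) $ c a $ u
      = adj_mat E $ c (a + int (Suc k)) $ u + adj_mat E $ c (a - int (Suc k)) $ u"
    by (simp add: matrix_matrix_mult_def ge2.IH(2) distrib_right sum.distrib)
  also have "\<dots> = of_bool (c (a + int (Suc (Suc k))) = u) + of_bool (c (a + int k) = u)
      + (of_bool (c (a - int k) = u) + of_bool (c (a - int (Suc (Suc k))) = u))"
  proof -
    have "a + int (Suc k) + 1 = a + int (Suc (Suc k))" "a + int (Suc k) - 1 = a + int k"
      "a - int (Suc k) + 1 = a - int k" "a - int (Suc k) - 1 = a - int (Suc (Suc k))"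
      by simp_all
    then show ?thesis
      by (simp only: adj_mat_cycle_labelling[OF lab])
  qed
  finally show ?case
    using ge2.IH(1) by simp
qed

section \<open>Two-regular graphs\<close>

definition two_regular_on :: "'v set \<Rightarrow> ('v \<Rightarrow> 'v \<Rightarrow> bool) \<Rightarrow> bool" where
  "two_regular_on S E \<longleftrightarrow> (\<forall>u v. E u v \<longrightarrow> u \<in> S \<and> v \<in> S) \<and> (\<forall>u v. E u v \<longleftrightarrow> E v u) \<and>
     (\<forall>u. \<not> E u u) \<and> (\<forall>u\<in>S. card {v. E u v} = 2)"

definition other_neighbour :: "('v \<Rightarrow> 'v \<Rightarrow> bool) \<Rightarrow> 'v \<Rightarrow> 'v \<Rightarrow> 'v" where
  "other_neighbour E u p = (THE q. E u q \<and> q \<noteq> p)"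

fun nonbacktracking_walk :: "('v \<Rightarrow> 'v \<Rightarrow> bool) \<Rightarrow> 'v \<Rightarrow> 'v \<Rightarrow> nat \<Rightarrow> 'v" where
  "nonbacktracking_walk E u v 0 = u"
| "nonbacktracking_walk E u v (Suc 0) = v"
| "nonbacktracking_walk E u v (Suc (Suc k)) =
     other_neighbour E (nonbacktracking_walk E u v (Suc k)) (nonbacktracking_walk E u v k)"

context
  fixes S :: "'v set" and E :: "'v \<Rightarrow> 'v \<Rightarrow> bool"
  assumes reg: "two_regular_on S E"
begin

lemma two_regular_on_edge: "E u v \<Longrightarrow> u \<in> S \<and> v \<in> S"
  using reg unfolding two_regular_on_def by blast

lemma two_regular_on_sym: "E u v \<longleftrightarrow> E v u"
  using reg by (simp add: two_regular_on_def)

lemma two_regular_on_irrefl: "\<not> E u u"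
  using reg by (simp add: two_regular_on_def)

lemma two_regular_on_card: "u \<in> S \<Longrightarrow> card {v. E u v} = 2"
  using reg unfolding two_regular_on_def by blast

lemma cycle_labelling_in_two_regular:
  assumes "cycle_labelling E n c"
  shows "c i \<in> S"
proof -
  have "E (c i) (c (i + 1))"
    using cycle_labelling_adj[OF assms] by simp
  then show ?thesis
    using two_regular_on_edge by blast
qed

lemma other_neighbour:
  assumes "E u p"
  shows "{v. E u v} = {p, other_neighbour E u p}" "other_neighbour E u p \<noteq> p"
proof -
  have "u \<in> S"
    using two_regular_on_edge assms by blast
  then obtain x y where xy: "x \<noteq> y" "{v. E u v} = {x, y}"
    using two_regular_on_card card_2_iff by metis
  moreover have "p = x \<or> p = y"
    using assms xy(2) by blast
  ultimately obtain q where q: "q \<noteq> p" "{v. E u v} = {p, q}"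
    by (metis insert_commute)
  have "other_neighbour E u p = q"
    unfolding other_neighbour_def by (rule the_equality) (use q in \<open>auto simp: set_eq_iff\<close>)
  then show "{v. E u v} = {p, other_neighbour E u p}" "other_neighbour E u p \<noteq> p"
    using q by simp_all
qed

lemma nonbacktracking_walk_step:
  assumes "E b v"
  shows "E (nonbacktracking_walk E b v k) (nonbacktracking_walk E b v (Suc k))"
proof (induction k)
  case (Suc k)
  then have "E (nonbacktracking_walk E b v (Suc k)) (nonbacktracking_walk E b v k)"
    by (simp add: two_regular_on_sym)
  then show ?case
    using other_neighbour(1) by (auto simp: set_eq_iff)
qed (simp add: assms)

lemma nonbacktracking_walk_neighbours:
  assumes "E b v"
  defines "h \<equiv> nonbacktracking_walk E b v"
  shows "{x. E (h (Suc k)) x} = {h k, h (Suc (Suc k))}" "h (Suc (Suc k)) \<noteq> h k"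
    and "h (Suc k) \<noteq> h k"
  using other_neighbour[of "h (Suc k)" "h k"] nonbacktracking_walk_step[OF assms(1), of k]
    two_regular_on_irrefl
  by (simp_all add: h_def two_regular_on_sym) metis

lemma nonbacktracking_walk_first_repetition:
  assumes bv: "E b v"
  defines "h \<equiv> nonbacktracking_walk E b v"
  assumes "i < n" "h i = h n" and first: "\<And>i j. i < j \<Longrightarrow> j < n \<Longrightarrow> h i \<noteq> h j"
  shows "i = 0"
proof (rule ccontr)
  note nbrs = nonbacktracking_walk_neighbours[OF bv, folded h_def]
  assume "i \<noteq> 0"
  then obtain i' n' where i': "i = Suc i'" and n': "n = Suc n'"
    using \<open>i < n\<close> by (metis less_imp_Suc_add not0_implies_Suc)
  have "E (h i) (h n')"
    using nonbacktracking_walk_step[OF bv, of n'] two_regular_on_sym \<open>h i = h n\<close> n'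
    by (simp add: h_def)
  then have "h n' = h i' \<or> h n' = h (Suc i)"
    using nbrs(1)[of i'] i' by auto
  then show False
  proof
    assume "h n' = h i'"
    then show False
      using first[of i' n'] \<open>i < n\<close> i' n' by simp
  next
    assume "h n' = h (Suc i)"
    moreover have "n' \<noteq> i"
      using nbrs(3)[of i] \<open>h i = h n\<close> n' by auto
    moreover have "n' \<noteq> Suc i"
      using nbrs(2)[of i] \<open>h i = h n\<close> n' by auto
    ultimately show False
      using first[of "Suc i" n'] \<open>i < n\<close> n' by (simp add: nat_neq_iff)
  qed
qed

lemma nonbacktracking_walk_periodic:
  assumes bv: "E b v"
  defines "h \<equiv> nonbacktracking_walk E b v"
  assumes n: "3 \<le> n" "h n = b" "inj_on h {0..<n}"
  shows "h (k + q * n) = h k"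
proof -
  have "h (Suc n) = h 1"
  proof -
    have "E (h n) (h 1)"
      using bv n(2) by (simp add: h_def)
    moreover have "{x. E (h n) x} = {h (n - 1), h (Suc n)}"
      using nonbacktracking_walk_neighbours(1)[OF bv, of "n - 1", folded h_def] n(1)
      by (simp add: Suc_diff_Suc numeral_eq_Suc)
    moreover have "h 1 \<noteq> h (n - 1)"
      using n(1) inj_onD[OF n(3), of 1 "n - 1"] by auto
    ultimately show ?thesis
      by auto
  qed
  then have "h (k + n) = h k \<and> h (Suc k + n) = h (Suc k)" for k
    using n(2) by (induction k) (simp_all add: h_def)
  then have shift: "h (k + n) = h k" for k
    by blast
  show ?thesis
  proof (induction q)
    case (Suc q)
    have "h (k + Suc q * n) = h ((k + q * n) + n)"
      by (simp add: algebra_simps)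
    then show ?case
      using Suc shift by simp
  qed simp
qed

end

lemma nonbacktracking_walk_returns:
  fixes E :: "'v::finite \<Rightarrow> 'v \<Rightarrow> bool"
  assumes reg: "two_regular_on S E" and bv: "E b v"
  defines "h \<equiv> nonbacktracking_walk E b v"
  obtains n where "3 \<le> n" "h n = b" "inj_on h {0..<n}"
proof -
  note nbrs = nonbacktracking_walk_neighbours[OF reg bv, folded h_def]
  have "\<not> inj h"
    by (meson finite range_inj_infinite)
  then have "\<exists>j. \<exists>i<j. h i = h j"
    unfolding inj_def by (metis linorder_neqE_nat)
  define n where "n = (LEAST j. \<exists>i<j. h i = h j)"
  have first: "h i \<noteq> h j" if "i < j" "j < n" for i j
    using not_less_Least[of j "\<lambda>j. \<exists>i<j. h i = h j"] that unfolding n_def by blast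
  obtain i where i: "i < n" "h i = h n"
    using LeastI_ex[OF \<open>\<exists>j. \<exists>i<j. h i = h j\<close>] unfolding n_def by blast
  then have "i = 0"
    using nonbacktracking_walk_first_repetition[OF reg bv, folded h_def] first by blast
  then have "h n = b"
    using i by (simp add: h_def)
  moreover have "n \<noteq> 1" "n \<noteq> 2"
    using \<open>h n = b\<close> nbrs(2,3)[of 0] by (auto simp: h_def numeral_2_eq_2)
  then have "3 \<le> n"
    using i(1) by linarith
  moreover have "inj_on h {0..<n}"
    unfolding inj_on_def by (metis atLeastLessThan_iff first nat_neq_iff)
  ultimately show ?thesis
    using that by blast
qed

lemma cycle_labelling_nonbacktracking_walk:
  assumes reg: "two_regular_on S E" and bv: "E b v"
  defines "h \<equiv> nonbacktracking_walk E b v"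
  assumes n: "3 \<le> n" "h n = b" "inj_on h {0..<n}"
  shows "cycle_labelling E n (\<lambda>i. h (nat (i mod int n)))"
proof -
  have h_mod: "h (nat (i mod int n)) = h k" if "int k mod int n = i mod int n" for i k
  proof -
    have "nat (i mod int n) = k mod n"
      by (metis that nat_int of_nat_mod)
    then show ?thesis
      using nonbacktracking_walk_periodic[OF reg bv n[unfolded h_def], of "k mod n" "k div n"]
      by (simp add: h_def mod_div_mult_eq)
  qed
  have "h (nat (i mod int n)) = h (nat (j mod int n)) \<longleftrightarrow> int n dvd i - j" for i j
  proof
    assume "h (nat (i mod int n)) = h (nat (j mod int n))"
    then have "nat (i mod int n) = nat (j mod int n)"
      using inj_onD[OF n(3)] n(1) by (simp add: nat_less_iff)
    then have "i mod int n = j mod int n"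
      using n(1) by (simp add: nat_eq_iff)
    then show "int n dvd i - j"
      by (simp add: mod_eq_dvd_iff)
  qed (simp add: mod_eq_dvd_iff[symmetric])
  moreover have "{u. E (h (nat (i mod int n))) u}
      = {h (nat ((i + 1) mod int n)), h (nat ((i - 1) mod int n))}" for i
  proof -
    define k where "k = nat ((i - 1) mod int n)"
    have mods: "int k mod int n = (i - 1) mod int n" "int (Suc k) mod int n = i mod int n"
      "int (Suc (Suc k)) mod int n = (i + 1) mod int n"
      using n(1) by (simp_all add: k_def mod_add_right_eq add.commute)
    then show ?thesis
      using nonbacktracking_walk_neighbours(1)[OF reg bv, of k, folded h_def]
        h_mod[OF mods(1)] h_mod[OF mods(2)] h_mod[OF mods(3)]
      by (simp add: insert_commute)
  qed
  ultimately show ?thesis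
    using n(1) unfolding cycle_labelling_def by simp
qed

lemma two_regular_cycle_labelling_exists:
  fixes E :: "'v::finite \<Rightarrow> 'v \<Rightarrow> bool"
  assumes reg: "two_regular_on S E" and "b \<in> S"
  obtains n c where "cycle_labelling E n c" "c 0 = b"
proof -
  obtain v where bv: "E b v"
    using two_regular_on_card[OF reg \<open>b \<in> S\<close>]
    by (metis card.empty empty_Collect_eq zero_neq_numeral)
  obtain n where "3 \<le> n" "nonbacktracking_walk E b v n = b"
    "inj_on (nonbacktracking_walk E b v) {0..<n}"
    using nonbacktracking_walk_returns[OF reg bv] by blast
  from cycle_labelling_nonbacktracking_walk[OF reg bv this] that show ?thesis
    by simp
qed

lemma vieta_lucas_adj_nonneg:
  fixes E :: "'v::finite \<Rightarrow> 'v \<Rightarrow> bool"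
  assumes "two_regular_on S E" "u \<in> S"
  shows "0 \<le> vieta_lucas k (adj_mat E) $ u $ v"
proof -
  obtain n c where "cycle_labelling E n c" "c 0 = u"
    using two_regular_cycle_labelling_exists[OF assms] .
  then show ?thesis
    using vieta_lucas_adj_cycle_labelling[of E n c k 0 v] by simp
qed

definition cycle_sets :: "('v \<Rightarrow> 'v \<Rightarrow> bool) \<Rightarrow> 'v set set" where
  "cycle_sets E = {range c | n c. cycle_labelling E n c}"

lemma partition_on_cycle_sets:
  fixes E :: "'v::finite \<Rightarrow> 'v \<Rightarrow> bool"
  assumes reg: "two_regular_on S E"
  shows "partition_on S (cycle_sets E)"
proof (rule partition_onI)
  show "\<Union> (cycle_sets E) = S"
  proof (intro equalityI subsetI)
    fix u assume "u \<in> S"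
    then obtain n c where "cycle_labelling E n c" "c 0 = u"
      using two_regular_cycle_labelling_exists[OF reg] by blast
    then show "u \<in> \<Union> (cycle_sets E)"
      unfolding cycle_sets_def by blast
  qed (auto simp: cycle_sets_def cycle_labelling_in_two_regular[OF reg])
next
  fix C D assume "C \<in> cycle_sets E" "D \<in> cycle_sets E" "C \<noteq> D"
  then show "disjnt C D"
    unfolding cycle_sets_def disjnt_def using cycle_labelling_ranges_eq by blast
qed (auto simp: cycle_sets_def)

lemma cycle_sets_labelling_at:
  assumes "C \<in> cycle_sets E" "b \<in> C"
  obtains n c where "cycle_labelling E n c" "c 0 = b" "range c = C"
proof -
  obtain n d a where d: "cycle_labelling E n d" "C = range d" "b = d a"
    using assms unfolding cycle_sets_def by blast
  have "range (\<lambda>i. d (a + i)) = range d"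
  proof (intro equalityI subsetI)
    fix x assume "x \<in> range d"
    then obtain j where "x = d (a + (j - a))"
      by auto
    then show "x \<in> range (\<lambda>i. d (a + i))"
      by blast
  qed auto
  then show ?thesis
    using that[of n "\<lambda>i. d (a + i)"] cycle_labelling_shift[OF d(1)] d by simp
qed

lemma two_regular_degree_sum:
  fixes E :: "'v::finite \<Rightarrow> 'v \<Rightarrow> bool"
  assumes "two_regular_on S E"
  shows "(\<Sum>u\<in>UNIV. real (card {v. E u v})) = 2 * real (card S)"
proof -
  have "real (card {v. E u v}) = 2 * of_bool (u \<in> S)" for u
    using two_regular_on_card[OF assms, of u] two_regular_on_edge[OF assms, of u] by auto
  then show ?thesis
    by (simp add: sum_distrib_left)
qed

lemma two_regular_adj_quadratic_form:
  fixes E :: "'v::finite \<Rightarrow> 'v \<Rightarrow> bool" and x :: "real^'v"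
  assumes reg: "two_regular_on S E" and supp: "\<And>u. u \<notin> S \<Longrightarrow> x $ u = 0"
  shows "(\<Sum>u\<in>UNIV. \<Sum>v\<in>UNIV. adj_mat E $ u $ v * (x $ u - x $ v)\<^sup>2)
    = 4 * (x \<bullet> x) - 2 * (x \<bullet> (adj_mat E *v x))"
proof -
  define a where "a u v = adj_mat E $ u $ v" for u v
  have a_sym: "a u v = a v u" for u v
    using two_regular_on_sym[OF reg] by (simp add: a_def adj_mat_def)
  have deg: "(\<Sum>v\<in>UNIV. a u v) * (x $ u)\<^sup>2 = 2 * (x $ u * x $ u)" for u
    using two_regular_on_card[OF reg, of u] supp[of u]
    by (cases "u \<in> S") (simp_all add: a_def adj_mat_def sum.If_cases power2_eq_square)
  have sum_deg: "(\<Sum>u\<in>UNIV. \<Sum>v\<in>UNIV. a u v * (x $ u)\<^sup>2) = 2 * (x \<bullet> x)"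
    by (simp add: sum_distrib_right[symmetric] deg inner_vec_def sum_distrib_left)
  have "(\<Sum>u\<in>UNIV. \<Sum>v\<in>UNIV. a u v * (x $ u - x $ v)\<^sup>2)
      = (\<Sum>u\<in>UNIV. \<Sum>v\<in>UNIV. a u v * (x $ u)\<^sup>2) + (\<Sum>u\<in>UNIV. \<Sum>v\<in>UNIV. a v u * (x $ v)\<^sup>2)
        - 2 * (\<Sum>u\<in>UNIV. \<Sum>v\<in>UNIV. a u v * (x $ u * x $ v))"
    by (simp add: a_sym power2_diff algebra_simps sum.distrib sum_subtractf sum_distrib_left)
  also have "(\<Sum>u\<in>UNIV. \<Sum>v\<in>UNIV. a v u * (x $ v)\<^sup>2) = 2 * (x \<bullet> x)"
    using sum_deg by (subst sum.swap) simp
  also have "(\<Sum>u\<in>UNIV. \<Sum>v\<in>UNIV. a u v * (x $ u * x $ v)) = x \<bullet> (adj_mat E *v x)"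
    by (simp add: a_def inner_vec_def matrix_vector_mult_def sum_distrib_left mult_ac)
  finally show ?thesis
    using sum_deg by (simp add: a_def)
qed

lemma two_regular_adj_eigenvector:
  fixes E :: "'v::finite \<Rightarrow> 'v \<Rightarrow> bool" and x :: "real^'v"
  assumes reg: "two_regular_on S E" and supp: "\<And>u. u \<notin> S \<Longrightarrow> x $ u = 0"
    and "x \<bullet> (adj_mat E *v x) = 2 * (x \<bullet> x)"
  shows "adj_mat E *v x = 2 *\<^sub>R x"
proof -
  have "(\<Sum>u\<in>UNIV. \<Sum>v\<in>UNIV. adj_mat E $ u $ v * (x $ u - x $ v)\<^sup>2) = 0"
    using two_regular_adj_quadratic_form[OF reg supp] assms(3) by simp
  moreover have "0 \<le> adj_mat E $ u $ v * (x $ u - x $ v)\<^sup>2" for u v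
    by (simp add: adj_mat_entry)
  ultimately have "adj_mat E $ u $ v * (x $ u - x $ v)\<^sup>2 = 0" for u v
    by (simp add: sum_nonneg sum_nonneg_eq_0_iff)
  then have const: "x $ v = x $ u" if "E u v" for u v
    using that by (simp add: adj_mat_entry)
  show ?thesis
  proof (rule iffD2[OF vec_eq_iff], intro allI)
    fix u
    show "(adj_mat E *v x) $ u = (2 *\<^sub>R x) $ u"
    proof (cases "u \<in> S")
      case True
      then obtain p q where pq: "p \<noteq> q" "{v. E u v} = {p, q}"
        using two_regular_on_card[OF reg] by (metis card_2_iff)
      then have "E u p" "E u q"
        by auto
      then show ?thesis
        using pq const[of u p] const[of u q] by (simp add: adj_mat_mult_vec)
    next
      case False
      then have "{v. E u v} = {}"
        using two_regular_on_edge[OF reg] by blast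
      then show ?thesis
        using supp[OF False] by (simp add: adj_mat_mult_vec)
    qed
  qed
qed

lemma is_cycle_on_neighbours:
  assumes "is_cycle_on C E" "u \<in> C"
  shows "\<not> E u u" "card {v \<in> C. E u v} = 2" "v \<in> C \<Longrightarrow> E u v \<longleftrightarrow> E v u"
proof -
  obtain n f where n: "3 \<le> n" and f: "bij_betw f {0..<n} C"
    and adj: "\<And>i j. i < n \<Longrightarrow> j < n \<Longrightarrow> E (f i) (f j) \<longleftrightarrow> j = Suc i mod n \<or> i = Suc j mod n"
    using assms(1) unfolding is_cycle_on_def by blast
  obtain i where i: "i < n" "u = f i"
    using assms(2) f by (auto simp: bij_betw_def)
  show "\<not> E u u"
    using adj[OF i(1) i(1)] i n by (auto simp: mod_if)
  show "E u v \<longleftrightarrow> E v u" if v: "v \<in> C"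
  proof -
    obtain j where j: "j < n" "v = f j"
      using v f by (auto simp: bij_betw_def)
    then show ?thesis
      using adj[OF i(1) j(1)] adj[OF j(1) i(1)] i by auto
  qed
  have pred: "i = Suc j mod n \<longleftrightarrow> j = (i + n - 1) mod n" if "j < n" for j
    using i(1) that mod_if by auto
  have "{v \<in> C. E u v} = f ` {j \<in> {0..<n}. E u (f j)}"
    using f by (auto simp: bij_betw_def)
  also have "{j \<in> {0..<n}. E u (f j)} = {j \<in> {0..<n}. j = Suc i mod n \<or> i = Suc j mod n}"
    using adj i by auto
  also have "\<dots> = {Suc i mod n, (i + n - 1) mod n}"
    using pred n by auto
  finally have "{v \<in> C. E u v} = f ` {Suc i mod n, (i + n - 1) mod n}" .
  moreover have "Suc i mod n \<noteq> (i + n - 1) mod n"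
    using i(1) n by (auto simp: mod_if)
  moreover have "inj_on f {Suc i mod n, (i + n - 1) mod n}"
    by (rule inj_on_subset[OF bij_betw_imp_inj_on[OF f]]) (use n in auto)
  ultimately show "card {v \<in> C. E u v} = 2"
    by (simp add: card_image)
qed

lemma disjoint_union_of_cycles_two_regular:
  assumes "disjoint_union_of_cycles V E" and edges: "\<And>u v. E u v \<Longrightarrow> u \<in> V \<and> v \<in> V"
  shows "two_regular_on V E"
proof -
  obtain P where P: "partition_on V P" and cyc: "\<And>C. C \<in> P \<Longrightarrow> is_cycle_on C E"
    and sep: "\<And>C D x y. C \<in> P \<Longrightarrow> D \<in> P \<Longrightarrow> C \<noteq> D \<Longrightarrow> x \<in> C \<Longrightarrow> y \<in> D \<Longrightarrow> \<not> E x y"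
    using assms(1) unfolding disjoint_union_of_cycles_def by metis
  have part: "\<exists>C\<in>P. u \<in> C" if "u \<in> V" for u
    using P that by (auto simp: partition_on_def)
  have closed: "v \<in> C" if "C \<in> P" "u \<in> C" "E u v" for C u v
    using part[of v] edges[OF that(3)] sep[OF that(1) _ _ that(2)] that(3) by blast
  have "\<not> E u u" "card {v. E u v} = 2" if u: "u \<in> V" for u
  proof -
    obtain C where C: "C \<in> P" "u \<in> C"
      using part[OF u] by blast
    then have "{v. E u v} = {v \<in> C. E u v}"
      using closed by blast
    then show "\<not> E u u" "card {v. E u v} = 2"
      using is_cycle_on_neighbours[OF cyc[OF C(1)] C(2)] by simp_all
  qed
  moreover have "E v u" if uv: "E u v" for u v
  proof -
    obtain C where C: "C \<in> P" "u \<in> C"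
      using part edges[OF uv] by blast
    then show ?thesis
      using is_cycle_on_neighbours(3)[OF cyc[OF C(1)] C(2) closed[OF C uv]] uv by simp
  qed
  ultimately show ?thesis
    unfolding two_regular_on_def using edges by blast
qed

section \<open>Matching the cycles of two 2-regular graphs\<close>

definition cycle_transfer :: "'v set set \<Rightarrow> ('v set \<Rightarrow> int \<Rightarrow> 'v) \<Rightarrow> ('v set \<Rightarrow> int \<Rightarrow> 'v) \<Rightarrow> 'v \<Rightarrow> 'v"
  where "cycle_transfer I c d v = (if v \<in> \<Union> I
    then (let C = THE C. C \<in> I \<and> v \<in> C in d C (SOME i. c C i = v)) else v)"

context
  fixes E F :: "'v::finite \<Rightarrow> 'v \<Rightarrow> bool" and S :: "'v set" and I :: "'v set set"
    and len :: "'v set \<Rightarrow> nat" and c d :: "'v set \<Rightarrow> int \<Rightarrow> 'v"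
  assumes regE: "two_regular_on S E" and regF: "two_regular_on S F" and part: "partition_on S I"
    and lab_E: "\<forall>C\<in>I. cycle_labelling E (len C) (c C)"
    and lab_F: "\<forall>C\<in>I. cycle_labelling F (len C) (d C)"
    and ranges: "\<forall>C\<in>I. range (c C) = C"
    and disj: "\<forall>C\<in>I. \<forall>D\<in>I. C \<noteq> D \<longrightarrow> range (d C) \<inter> range (d D) = {}"
begin

lemma cycle_transfer_cover:
  assumes "v \<in> S"
  obtains C i where "C \<in> I" "v = c C i"
proof -
  obtain C where "C \<in> I" "v \<in> C"
    using assms part by (auto simp: partition_on_def)
  then show ?thesis
    using that ranges by blast
qed

lemma cycle_transfer_labels_eq_iff:
  assumes "C \<in> I"
  shows "d C i = d C j \<longleftrightarrow> c C i = c C j"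
proof -
  have "cycle_labelling E (len C) (c C)" "cycle_labelling F (len C) (d C)"
    using assms lab_E lab_F by blast+
  then show ?thesis
    by (simp add: cycle_labelling_eq_iff)
qed

lemma cycle_transfer_label:
  assumes "C \<in> I"
  shows "cycle_transfer I c d (c C i) = d C i"
proof -
  have in_C: "c C i \<in> C"
    using assms ranges by blast
  then have "(THE D. D \<in> I \<and> c C i \<in> D) = C"
    using assms part by (intro the_equality) (auto simp: partition_on_def disjoint_def)
  moreover have "c C (SOME j. c C j = c C i) = c C i"
    by (rule someI) (rule refl)
  then have "d C (SOME j. c C j = c C i) = d C i"
    using cycle_transfer_labels_eq_iff[OF assms] by blast
  ultimately show ?thesis
    using assms in_C by (auto simp: cycle_transfer_def)
qed

lemma cycle_transfer_outside: "v \<notin> S \<Longrightarrow> cycle_transfer I c d v = v"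
  using part by (simp add: cycle_transfer_def partition_on_def)

lemma inj_cycle_transfer: "inj (cycle_transfer I c d)"
proof (rule injI)
  fix u v assume eq: "cycle_transfer I c d u = cycle_transfer I c d v"
  have in_S: "d C i \<in> S" if "C \<in> I" for C i
    using cycle_labelling_in_two_regular[OF regF] lab_F that by blast
  consider "u \<in> S" "v \<in> S" | "u \<notin> S" "v \<notin> S" | "(u \<in> S) \<noteq> (v \<in> S)"
    by blast
  then show "u = v"
  proof cases
    case 1
    obtain C i D j where C: "C \<in> I" "u = c C i" and D: "D \<in> I" "v = c D j"
      using cycle_transfer_cover[OF 1(1)] cycle_transfer_cover[OF 1(2)] by metis
    then have "d C i = d D j"
      using eq cycle_transfer_label by simp
    then have "C = D"
      using C(1) D(1) disj by blast
    then show ?thesis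
      using \<open>d C i = d D j\<close> C D cycle_transfer_labels_eq_iff by simp
  next
    case 3
    then show ?thesis
      using eq cycle_transfer_cover cycle_transfer_label cycle_transfer_outside in_S by metis
  qed (use eq cycle_transfer_outside in simp)
qed

lemma bij_cycle_transfer: "bij (cycle_transfer I c d)"
  using inj_cycle_transfer by (simp add: bij_def finite_UNIV_inj_surj)

lemma cycle_transfer_iso: "E u v \<longleftrightarrow> F (cycle_transfer I c d u) (cycle_transfer I c d v)"
proof (cases "u \<in> S")
  case True
  then obtain C i where C: "C \<in> I" "u = c C i"
    by (rule cycle_transfer_cover)
  have "cycle_transfer I c d v = d C (i + 1) \<longleftrightarrow> v = c C (i + 1)"
    "cycle_transfer I c d v = d C (i - 1) \<longleftrightarrow> v = c C (i - 1)"
    using cycle_transfer_label[OF C(1)] inj_cycle_transfer by (metis injD)+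
  moreover have "cycle_labelling E (len C) (c C)" "cycle_labelling F (len C) (d C)"
    using C(1) lab_E lab_F by blast+
  ultimately show ?thesis
    using C cycle_transfer_label[OF C(1)] by (simp add: cycle_labelling_adj)
next
  case False
  then show ?thesis
    using cycle_transfer_outside two_regular_on_edge[OF regE] two_regular_on_edge[OF regF] by metis
qed

end

section \<open>Q-switching matrices\<close>

locale switching_matrix =
  fixes X :: "'v::finite set" and M :: "real^'v^'v"
  assumes across: "\<And>i j. (i \<in> X \<and> j \<notin> X) \<or> (i \<notin> X \<and> j \<in> X) \<Longrightarrow> M $ i $ j = 0"
    and diagonal: "\<And>i j. i \<notin> X \<Longrightarrow> j \<notin> X \<Longrightarrow> i \<noteq> j \<Longrightarrow> M $ i $ j = 0"
    and sign: "\<And>i. i \<notin> X \<Longrightarrow> M $ i $ i = 1 \<or> M $ i $ i = -1"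
    and orthonormal: "\<And>i j. i \<in> X \<Longrightarrow> j \<in> X \<Longrightarrow>
      (\<Sum>k\<in>X. M $ k $ i * M $ k $ j) = (if i = j then 1 else 0)"
begin

lemma outside: "i \<notin> X \<Longrightarrow> j \<noteq> i \<Longrightarrow> M $ i $ j = 0 \<and> M $ j $ i = 0"
  using across[of i j] across[of j i] diagonal[of i j] diagonal[of j i] by (cases "j \<in> X") auto

lemma sign_square: "i \<notin> X \<Longrightarrow> M $ i $ i * M $ i $ i = 1"
  using sign by fastforce

lemma mult_outside_left: "i \<notin> X \<Longrightarrow> (transpose M ** B) $ i $ j = M $ i $ i * B $ i $ j"
  unfolding matrix_matrix_mult_def transpose_def using outside
  by (simp add: sum.remove[of UNIV i] sum.neutral)

lemma mult_outside_right: "j \<notin> X \<Longrightarrow> (B ** M) $ i $ j = B $ i $ j * M $ j $ j"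
  unfolding matrix_matrix_mult_def using outside
  by (simp add: sum.remove[of UNIV j] sum.neutral)

lemma mult_vec_outside: "i \<notin> X \<Longrightarrow> (M *v x) $ i = M $ i $ i * x $ i"
  unfolding matrix_vector_mult_def using outside
  by (simp add: sum.remove[of UNIV i] sum.neutral)

lemma orthogonal: "orthogonal_matrix M"
  unfolding orthogonal_matrix
proof (rule iffD2[OF vec_eq_iff], intro allI iffD2[OF vec_eq_iff])
  fix i j
  show "(transpose M ** M) $ i $ j = mat 1 $ i $ j"
  proof (cases "i \<in> X \<and> j \<in> X")
    case True
    then have "(\<Sum>k\<in>UNIV. M $ k $ i * M $ k $ j) = (\<Sum>k\<in>X. M $ k $ i * M $ k $ j)"
      using across by (intro sum.mono_neutral_right) auto
    then show ?thesis
      using orthonormal True by (simp add: matrix_matrix_mult_def transpose_def mat_def)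
  next
    case False
    then consider "i \<notin> X" | "j \<notin> X"
      by blast
    then show ?thesis
    proof cases
      case 1
      then show ?thesis
        using outside[of i j] sign_square[of i] by (auto simp: mult_outside_left mat_def)
    next
      case 2
      then show ?thesis
        using outside[of j i] sign_square[of j]
        by (auto simp: mult_outside_right mat_def transpose_def)
    qed
  qed
qed

lemma conj_entry_outside:
  "i \<notin> X \<Longrightarrow> j \<notin> X \<Longrightarrow> (transpose M ** B ** M) $ i $ j = M $ i $ i * B $ i $ j * M $ j $ j"
  by (simp add: mult_outside_left mult_outside_right)

lemma conj_supported_outside:
  assumes "\<And>k l. k \<in> X \<or> l \<in> X \<Longrightarrow> B $ k $ l = 0"
  shows "(transpose M ** B ** M) $ i $ j = M $ i $ i * B $ i $ j * M $ j $ j"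
proof (cases "i \<in> X \<or> j \<in> X")
  case True
  have "M $ k $ i * B $ k $ l = 0" if "i \<in> X" for k l
    using assms[of k l] across[of k i] that by (cases "k \<in> X") auto
  then have left: "(transpose M ** B) $ i $ l = 0" if "i \<in> X" for l
    using that by (simp add: matrix_matrix_mult_def transpose_def sum.neutral)
  have "B $ k $ l * M $ l $ j = 0" if "j \<in> X" for k l
    using assms[of k l] across[of l j] that by (cases "l \<in> X") auto
  then have right: "(B ** M) $ k $ j = 0" if "j \<in> X" for k
    using that by (simp add: matrix_matrix_mult_def sum.neutral)
  from True show ?thesis
  proof
    assume "i \<in> X"
    then show ?thesis
      using assms[of i j] by (simp add: matrix_matrix_mult_def[of "transpose M ** B"] left)
  next
    assume "j \<in> X"
    then show ?thesis
      using assms[of i j] unfolding matrix_mul_assoc[symmetric]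
      by (simp add: matrix_matrix_mult_def[of "transpose M"] right)
  qed
qed (simp add: conj_entry_outside)

end

section \<open>The neighbourhood graphs of a Q-switching\<close>

locale q_switched_graphs = switching_matrix X M for X :: "'v::finite set" and M +
  fixes G H :: "'v \<Rightarrow> 'v \<Rightarrow> bool"
  assumes simple_G: "simple_graph G" and simple_H: "simple_graph H"
    and adj_H: "adj_mat H = transpose M ** adj_mat G ** M"
begin

lemma H_iff_G_outside:
  assumes "i \<notin> X" "j \<notin> X"
  shows "H i j \<longleftrightarrow> G i j" and "G i j \<Longrightarrow> M $ i $ i * M $ j $ j = 1"
proof -
  have "adj_mat H $ i $ j = M $ i $ i * adj_mat G $ i $ j * M $ j $ j"
    using conj_entry_outside[OF assms, of "adj_mat G"] by (simp add: adj_H)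
  then have "(if H i j then 1 else 0) = M $ i $ i * (if G i j then 1 else 0) * M $ j $ j"
    by (simp add: adj_mat_def)
  then show "H i j \<longleftrightarrow> G i j" "G i j \<Longrightarrow> M $ i $ i * M $ j $ j = 1"
    using sign[OF assms(1)] sign[OF assms(2)] by (auto split: if_splits)
qed

lemma adj_nbhd_edges_conj:
  "transpose M ** adj_mat (nbhd_edges G X) ** M = adj_mat (nbhd_edges H X)"
proof -
  define R where "R E = adj_mat (\<lambda>u v. E u v \<and> u \<notin> X \<and> v \<notin> X)" for E :: "'v \<Rightarrow> 'v \<Rightarrow> bool"
  have split: "adj_mat E = adj_mat (nbhd_edges E X) + R E" for E
    by (auto simp: vec_eq_iff R_def adj_mat_entry nbhd_edges_def)
  have "transpose M ** R G ** M = R H"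
  proof (rule iffD2[OF vec_eq_iff], intro allI iffD2[OF vec_eq_iff])
    fix i j
    show "(transpose M ** R G ** M) $ i $ j = R H $ i $ j"
      using conj_supported_outside[of "R G" i j] H_iff_G_outside[of i j]
      by (auto simp: R_def adj_mat_entry)
  qed
  then have "transpose M ** adj_mat (nbhd_edges G X) ** M + R H = adj_mat (nbhd_edges H X) + R H"
    using adj_H split[of G] split[of H] by (simp add: matrix_add_ldistrib matrix_add_rdistrib)
  then show ?thesis
    by simp
qed

lemma vieta_lucas_nbhd_edges_conj:
  "vieta_lucas k (adj_mat (nbhd_edges H X))
    = transpose M ** vieta_lucas k (adj_mat (nbhd_edges G X)) ** M"
  using vieta_lucas_orthogonal_conj[OF orthogonal] by (simp add: adj_nbhd_edges_conj[symmetric])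

lemma trace_vieta_lucas_nbhd_edges:
  "trace (vieta_lucas k (adj_mat (nbhd_edges H X)))
    = trace (vieta_lucas k (adj_mat (nbhd_edges G X)))"
  by (simp add: vieta_lucas_nbhd_edges_conj trace_orthogonal_conj[OF orthogonal])

lemma nbhd_edges_H_sym: "nbhd_edges H X u v \<longleftrightarrow> nbhd_edges H X v u"
  using simple_H by (auto simp: nbhd_edges_def simple_graph_def)

lemma nbhd_edges_H_in_nbhd_vertices:
  assumes "nbhd_edges H X u v"
  shows "u \<in> nbhd_vertices G X \<and> v \<in> nbhd_vertices G X"
proof -
  have "v \<in> nbhd_vertices G X" if "nbhd_edges H X u v" for u v
  proof (rule ccontr)
    assume v: "v \<notin> nbhd_vertices G X"
    then have "\<not> nbhd_edges G X k v" for k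
      using simple_G by (auto simp: nbhd_edges_def nbhd_vertices_def simple_graph_def)
    then have "(transpose M ** adj_mat (nbhd_edges G X)) $ u $ v = 0"
      by (simp add: matrix_matrix_mult_def adj_mat_entry)
    moreover have "v \<notin> X"
      using v by (simp add: nbhd_vertices_def)
    ultimately have "adj_mat (nbhd_edges H X) $ u $ v = 0"
      by (simp add: adj_nbhd_edges_conj[symmetric] mult_outside_right)
    then show False
      using that by (simp add: adj_mat_entry)
  qed
  then show ?thesis
    using assms nbhd_edges_H_sym by blast
qed

lemma nbhd_edges_H_degree_sum:
  assumes regG: "two_regular_on (nbhd_vertices G X) (nbhd_edges G X)"
  shows "(\<Sum>u\<in>UNIV. real (card {v. nbhd_edges H X u v})) = 2 * real (card (nbhd_vertices G X))"
proof -
  define A where "A = adj_mat (nbhd_edges G X)"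
  have "(\<Sum>u\<in>UNIV. real (card {v. nbhd_edges H X u v}))
      = trace (adj_mat (nbhd_edges H X) ** adj_mat (nbhd_edges H X))"
    by (simp add: trace_adj_mat_square[OF nbhd_edges_H_sym])
  also have "adj_mat (nbhd_edges H X) ** adj_mat (nbhd_edges H X)
      = transpose M ** A ** (M ** transpose M) ** A ** M"
    by (simp add: A_def adj_nbhd_edges_conj[symmetric] matrix_mul_assoc)
  also have "\<dots> = transpose M ** (A ** A) ** M"
    using orthogonal by (simp add: orthogonal_matrix_def matrix_mul_assoc)
  also have "trace \<dots> = trace (A ** A)"
    using orthogonal by (rule trace_orthogonal_conj)
  also have "\<dots> = 2 * real (card (nbhd_vertices G X))"
    using two_regular_on_sym[OF regG] two_regular_degree_sum[OF regG]
    by (simp add: A_def trace_adj_mat_square)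
  finally show ?thesis .
qed

text \<open>With \<open>z\<close> the indicator vector of \<open>S = X \<union> N(X)\<close> and \<open>w = M z\<close>, the equal edge counts give
  \<open>w \<bullet> A(G\<^sub>X) w = z \<bullet> A(H\<^sub>X) z = 2 |S| = 2 (w \<bullet> w)\<close>, so \<open>w\<close> attains the largest eigenvalue \<open>2\<close>
  of \<open>A(G\<^sub>X)\<close>; then \<open>z = M\<^sup>T w\<close> is an eigenvector of \<open>A(H\<^sub>X)\<close> for \<open>2\<close>, i.e. \<open>H\<^sub>X\<close> is
  2-regular on \<open>S\<close>.\<close>
lemma two_regular_nbhd_edges_H:
  assumes regG: "two_regular_on (nbhd_vertices G X) (nbhd_edges G X)"
  shows "two_regular_on (nbhd_vertices G X) (nbhd_edges H X)"
proof -
  define S where "S = nbhd_vertices G X"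
  define A where "A = adj_mat (nbhd_edges G X)"
  define B where "B = adj_mat (nbhd_edges H X)"
  define z :: "real^'v" where "z = (\<chi> u. of_bool (u \<in> S))"
  define w where "w = M *v z"
  note H_in = nbhd_edges_H_in_nbhd_vertices[folded S_def]
  have conj: "transpose M ** A ** M = B"
    unfolding A_def B_def by (rule adj_nbhd_edges_conj)
  have "z \<bullet> (B *v z) = (\<Sum>u\<in>S. real (card {v. nbhd_edges H X u v}))"
    using H_in by (simp add: inner_vec_def z_def B_def adj_mat_mult_indicator)
  also have "\<dots> = (\<Sum>u\<in>UNIV. real (card {v. nbhd_edges H X u v}))"
    using H_in by (intro sum.mono_neutral_left) auto
  finally have "w \<bullet> (A *v w) = 2 * real (card S)"
    using inner_congruence[of z M A] nbhd_edges_H_degree_sum[OF regG]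
    by (simp add: conj w_def S_def)
  moreover have "w \<bullet> w = z \<bullet> z"
    using inner_congruence[of z M "mat 1"] orthogonal by (simp add: orthogonal_matrix_def w_def)
  moreover have "z \<bullet> z = real (card S)"
    by (simp add: inner_vec_def z_def)
  moreover have "w $ u = 0" if "u \<notin> S" for u
    using that mult_vec_outside[of u z] by (simp add: w_def z_def S_def nbhd_vertices_def)
  ultimately have "A *v w = 2 *\<^sub>R w"
    using two_regular_adj_eigenvector[OF regG] unfolding A_def S_def by simp
  moreover have "transpose M *v w = z"
    using orthogonal by (simp only: w_def matrix_vector_mul_assoc orthogonal_matrix_def
        matrix_vector_mul_lid)
  ultimately have "B *v z = 2 *\<^sub>R z"
    unfolding conj[symmetric] w_def
    by (simp only: matrix_vector_mul_assoc[symmetric] matrix_vector_mult_scaleR)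
  then have "card {v. nbhd_edges H X u v} = 2" if "u \<in> S" for u
    using adj_mat_mult_indicator[of "nbhd_edges H X" S u] H_in that
    by (simp add: vec_eq_iff B_def z_def)
  moreover have "\<not> nbhd_edges H X u u" for u
    using simple_H by (simp add: nbhd_edges_def simple_graph_def)
  ultimately show ?thesis
    unfolding two_regular_on_def S_def[symmetric] using H_in nbhd_edges_H_sym by blast
qed

end

locale q_switched_nbhd_cycles = q_switched_graphs +
  assumes cycles: "disjoint_union_of_cycles (nbhd_vertices G X) (nbhd_edges G X)"
begin

lemma two_regular_G: "two_regular_on (nbhd_vertices G X) (nbhd_edges G X)"
proof (rule disjoint_union_of_cycles_two_regular[OF cycles])
  fix u v assume "nbhd_edges G X u v"
  then show "u \<in> nbhd_vertices G X \<and> v \<in> nbhd_vertices G X"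
    using simple_G by (auto simp: nbhd_edges_def nbhd_vertices_def simple_graph_def)
qed

lemma two_regular_H: "two_regular_on (nbhd_vertices G X) (nbhd_edges H X)"
  by (rule two_regular_nbhd_edges_H[OF two_regular_G])

lemma vieta_lucas_outside:
  assumes "u \<in> nbhd_vertices G X" "u \<notin> X" "v \<notin> X"
  shows "vieta_lucas k (adj_mat (nbhd_edges H X)) $ u $ v
    = vieta_lucas k (adj_mat (nbhd_edges G X)) $ u $ v"
proof -
  have "vieta_lucas k (adj_mat (nbhd_edges H X)) $ u $ v
      = M $ u $ u * vieta_lucas k (adj_mat (nbhd_edges G X)) $ u $ v * M $ v $ v"
    by (simp add: vieta_lucas_nbhd_edges_conj conj_entry_outside[OF assms(2,3)])
  moreover have "0 \<le> vieta_lucas k (adj_mat (nbhd_edges H X)) $ u $ v"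
    "0 \<le> vieta_lucas k (adj_mat (nbhd_edges G X)) $ u $ v"
    using vieta_lucas_adj_nonneg two_regular_H two_regular_G assms(1) by blast+
  ultimately show ?thesis
    using sign[OF assms(2)] sign[OF assms(3)] by auto
qed

lemma distance_transfer:
  assumes c: "cycle_labelling (nbhd_edges G X) n c" and d: "cycle_labelling (nbhd_edges H X) m d"
    and "c a = d b" "c a \<notin> X" "u \<notin> X"
  shows "c (a + int k) = u \<or> c (a - int k) = u \<longleftrightarrow> d (b + int k) = u \<or> d (b - int k) = u"
proof -
  have "c a \<in> nbhd_vertices G X"
    by (rule cycle_labelling_in_two_regular[OF two_regular_G c])
  have "(of_bool (c (a + int k) = u) + of_bool (c (a - int k) = u) :: real)
      = vieta_lucas k (adj_mat (nbhd_edges G X)) $ c a $ u"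
    by (rule vieta_lucas_adj_cycle_labelling[OF c, symmetric])
  also have "\<dots> = vieta_lucas k (adj_mat (nbhd_edges H X)) $ c a $ u"
    using vieta_lucas_outside \<open>c a \<in> nbhd_vertices G X\<close> assms(4,5) by simp
  also have "\<dots> = of_bool (d (b + int k) = u) + of_bool (d (b - int k) = u)"
    unfolding \<open>c a = d b\<close> by (rule vieta_lucas_adj_cycle_labelling[OF d])
  finally show ?thesis
    by (auto simp: of_bool_def split: if_splits)
qed

lemma distance_transfer_int:
  assumes c: "cycle_labelling (nbhd_edges G X) n c" and d: "cycle_labelling (nbhd_edges H X) n d"
    and "c a = d b" "c a \<notin> X" "u \<notin> X"
  shows "c (a + t) = u \<or> c (a - t) = u \<longleftrightarrow> d (b + t) = u \<or> d (b - t) = u"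
proof -
  have "int (nat (t mod int n)) = t mod int n"
    using cycle_labelling_length[OF c] by simp
  then show ?thesis
    using distance_transfer[OF assms, of "nat (t mod int n)"]
    by (simp add: cycle_labelling_mod[OF c] cycle_labelling_mod[OF d])
qed

lemma cycle_length_eq_outside:
  assumes c: "cycle_labelling (nbhd_edges G X) n c" and d: "cycle_labelling (nbhd_edges H X) m d"
    and "c 0 = d 0" "c 0 \<notin> X"
  shows "m = n"
proof -
  have "c (0 + int n) = c 0"
    by (simp add: cycle_labelling_eq_iff[OF c])
  then have "d (0 + int n) = c 0 \<or> d (0 - int n) = c 0"
    using distance_transfer[OF c d assms(3,4,4), of n] by blast
  then have "int m dvd int n"
    using assms(3) by (auto simp: cycle_labelling_eq_iff[OF d])
  moreover have "d (0 + int m) = c 0"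
    using assms(3) by (simp add: cycle_labelling_eq_iff[OF d])
  then have "c (0 + int m) = c 0 \<or> c (0 - int m) = c 0"
    using distance_transfer[OF c d assms(3,4,4), of m] by blast
  then have "int n dvd int m"
    by (auto simp: cycle_labelling_eq_iff[OF c])
  ultimately show ?thesis
    by (simp add: dvd_antisym)
qed

definition agreeing_labellings where
  "agreeing_labellings n c d \<longleftrightarrow> cycle_labelling (nbhd_edges G X) n c \<and>
     cycle_labelling (nbhd_edges H X) n d \<and> (\<forall>i. c i \<notin> X \<longrightarrow> d i = c i)"

lemma reorient_to_agree:
  assumes c: "cycle_labelling (nbhd_edges G X) n c" and d: "cycle_labelling (nbhd_edges H X) n d"
    and "c 0 = d 0" "c 0 \<notin> X"
  obtains d' where "agreeing_labellings n c d'"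
proof -
  note transfer = distance_transfer_int[OF c d]
  have either: "d i = c i \<or> d (- i) = c i" if "c i \<notin> X" for i
    using transfer[OF assms(3,4) that, of i] by simp
  have "(\<forall>i. c i \<notin> X \<longrightarrow> d i = c i) \<or> (\<forall>i. c i \<notin> X \<longrightarrow> d (- i) = c i)"
  proof (rule ccontr)
    assume "\<not> ?thesis"
    then obtain i j where i: "c i \<notin> X" "d i \<noteq> c i" and j: "c j \<notin> X" "d (- j) \<noteq> c j"
      by blast
    then have "d (- i) = c i" "d j = c j"
      using either by blast+
    have "d (j + (i - j)) = c i \<or> d (j - (i - j)) = c i"
      using transfer[of j j "c i" "i - j"] \<open>d j = c j\<close> i(1) j(1) by simp
    then have "d (2 * j - i) = d (- i)"
      using i(2) \<open>d (- i) = c i\<close> by (simp add: algebra_simps)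
    then have "d j = d (- j)"
      by (simp add: cycle_labelling_eq_iff[OF d] algebra_simps)
    then show False
      using j(2) \<open>d j = c j\<close> by simp
  qed
  then show ?thesis
    using that c d cycle_labelling_reflect[OF d] unfolding agreeing_labellings_def by blast
qed

lemma agreeing_labellings_through:
  assumes "C \<in> cycle_sets (nbhd_edges G X)" "b \<in> C" "b \<notin> X"
  obtains n c d where "agreeing_labellings n c d" "range c = C" "c 0 \<notin> X"
proof -
  obtain n c where c: "cycle_labelling (nbhd_edges G X) n c" "c 0 = b" "range c = C"
    using cycle_sets_labelling_at[OF assms(1,2)] .
  then have "b \<in> nbhd_vertices G X"
    using cycle_labelling_in_two_regular[OF two_regular_G] by blast
  then obtain m d where d: "cycle_labelling (nbhd_edges H X) m d" "d 0 = b"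
    using two_regular_cycle_labelling_exists[OF two_regular_H] by blast
  have "m = n"
    using cycle_length_eq_outside[OF c(1) d(1)] c(2) d(2) assms(3) by simp
  then show ?thesis
    using reorient_to_agree[OF c(1)] d c(2,3) assms(3) that by metis
qed

lemma agreeing_labellings_disjoint:
  assumes "agreeing_labellings n c d" "c 0 \<notin> X" "agreeing_labellings n' c' d'" "c' 0 \<notin> X"
    and "range c \<noteq> range c'"
  shows "range d \<inter> range d' = {}"
proof (rule ccontr)
  have c: "cycle_labelling (nbhd_edges G X) n c" and d: "cycle_labelling (nbhd_edges H X) n d"
    and c': "cycle_labelling (nbhd_edges G X) n' c'"
    and d': "cycle_labelling (nbhd_edges H X) n' d'"
    and "d 0 = c 0" "d' 0 = c' 0"
    using assms(1-4) by (simp_all add: agreeing_labellings_def)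
  assume "range d \<inter> range d' \<noteq> {}"
  then obtain i j where "d i = d' j"
    by blast
  then have "range d = range d'"
    by (rule cycle_labelling_ranges_eq[OF d d'])
  then have "c' 0 \<in> range d"
    using \<open>d' 0 = c' 0\<close> by (metis rangeI)
  then obtain t where "d (0 + t) = c' 0"
    by auto
  then have "c (0 + t) = c' 0 \<or> c (0 - t) = c' 0"
    using distance_transfer_int[OF c d \<open>d 0 = c 0\<close>[symmetric] assms(2,4)] by blast
  then have "range c = range c'"
    using cycle_labelling_ranges_eq[OF c c'] by metis
  then show False
    using assms(5) by blast
qed

lemma cycle_inside_X_eq_UNIV:
  assumes "connected_graph G" "C \<in> cycle_sets (nbhd_edges G X)" "C \<subseteq> X"
  shows "C = UNIV"
proof -
  obtain n c where c: "cycle_labelling (nbhd_edges G X) n c" "C = range c"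
    using assms(2) unfolding cycle_sets_def by blast
  have "v \<in> C" for v
  proof -
    have "(c 0, v) \<in> {(x, y). G x y}\<^sup>*"
      using assms(1) unfolding connected_graph_def by blast
    then show ?thesis
    proof (induction rule: rtrancl_induct)
      case (step y z)
      then obtain i where "y = c i"
        using c(2) by blast
      moreover have "nbhd_edges G X y z"
        using step assms(3) by (auto simp: nbhd_edges_def)
      ultimately show ?case
        using c by (auto simp: cycle_labelling_adj[OF c(1)])
    qed (simp add: c(2))
  qed
  then show ?thesis
    by blast
qed

text \<open>On a cycle whose length divides \<open>m\<close> the diagonal of \<open>vieta_lucas m\<close> is \<open>2\<close>, on the
  other cycles it is \<open>0\<close>. The traces for \<open>G\<^sub>X\<close> and \<open>H\<^sub>X\<close> agree, and the one for \<open>H\<^sub>X\<close> is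
  positive if \<open>m\<close> is the length of one of its cycles.\<close>
lemma spanning_cycle_length_dvd:
  assumes c: "cycle_labelling (nbhd_edges G X) n c" and "range c = UNIV"
    and d: "cycle_labelling (nbhd_edges H X) m d"
  shows "n dvd m"
proof -
  have all_in: "v \<in> nbhd_vertices G X" for v
    using cycle_labelling_in_two_regular[OF two_regular_G c] assms(2) by (metis UNIV_I image_iff)
  have diag_G: "vieta_lucas m (adj_mat (nbhd_edges G X)) $ v $ v = 2 * of_bool (int n dvd int m)"
    for v
  proof -
    obtain a where "v = c a"
      using assms(2) by (metis UNIV_I image_iff)
    then show ?thesis
      by (simp add: vieta_lucas_adj_cycle_labelling[OF c] cycle_labelling_eq_iff[OF c])
  qed
  have "2 = vieta_lucas m (adj_mat (nbhd_edges H X)) $ d 0 $ d 0"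
    by (simp add: vieta_lucas_adj_cycle_labelling[OF d] cycle_labelling_eq_iff[OF d])
  also have "\<dots> \<le> trace (vieta_lucas m (adj_mat (nbhd_edges H X)))"
    unfolding trace_def
    by (rule member_le_sum) (use vieta_lucas_adj_nonneg[OF two_regular_H all_in] in auto)
  also have "\<dots> = trace (vieta_lucas m (adj_mat (nbhd_edges G X)))"
    by (rule trace_vieta_lucas_nbhd_edges)
  also have "\<dots> = real n * (2 * of_bool (int n dvd int m))"
    using card_range_cycle_labelling[OF c] assms(2) by (simp add: trace_def diag_G)
  finally show "n dvd m"
    by (cases "int n dvd int m") auto
qed

lemma spanning_cycle_labelling_H:
  assumes c: "cycle_labelling (nbhd_edges G X) n c" and "range c = UNIV"
  obtains d where "cycle_labelling (nbhd_edges H X) n d" "range d = UNIV"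
proof -
  have "c 0 \<in> nbhd_vertices G X"
    by (rule cycle_labelling_in_two_regular[OF two_regular_G c])
  then obtain m d where d: "cycle_labelling (nbhd_edges H X) m d"
    using two_regular_cycle_labelling_exists[OF two_regular_H] by blast
  have n: "card (range c) = n"
    by (rule card_range_cycle_labelling[OF c])
  have "n dvd m"
    by (rule spanning_cycle_length_dvd[OF c assms(2) d])
  moreover have "m \<le> n"
    using card_range_cycle_labelling[OF d] n card_mono[of UNIV "range d"] assms(2) by simp
  moreover have "0 < m"
    using cycle_labelling_length[OF d] by simp
  ultimately have "m = n"
    by (simp add: dvd_imp_le le_antisym)
  then have "range d = UNIV"
    using card_range_cycle_labelling[OF d] n assms(2) by (metis card_subset_eq finite subset_UNIV)
  then show ?thesis
    using that d \<open>m = n\<close> by blast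
qed

lemma nbhd_iso_cycle_inside_X:
  assumes "connected_graph G" "C \<in> cycle_sets (nbhd_edges G X)" "C \<subseteq> X"
  obtains f where "bij f" "\<And>v. v \<notin> X \<Longrightarrow> f v = v"
    "\<And>u v. nbhd_edges G X u v \<longleftrightarrow> nbhd_edges H X (f u) (f v)"
proof -
  have "C = UNIV"
    using cycle_inside_X_eq_UNIV[OF assms] .
  then obtain n c where c: "cycle_labelling (nbhd_edges G X) n c" "range c = UNIV"
    using assms(2) unfolding cycle_sets_def by auto
  obtain d where d: "cycle_labelling (nbhd_edges H X) n d" "range d = UNIV"
    using spanning_cycle_labelling_H[OF c] .
  have "range c \<subseteq> nbhd_vertices G X"
    using cycle_labelling_in_two_regular[OF two_regular_G c(1)] by blast
  then have "nbhd_vertices G X = UNIV"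
    using c(2) by blast
  then have "partition_on (nbhd_vertices G X) {UNIV}"
    by (simp add: partition_on_space)
  note transfer = two_regular_G two_regular_H this
  have "X = UNIV"
    using \<open>C = UNIV\<close> assms(3) by blast
  then show ?thesis
    using that c d
      bij_cycle_transfer[where len = "\<lambda>_. n" and c = "\<lambda>_. c" and d = "\<lambda>_. d", OF transfer]
      cycle_transfer_iso[where len = "\<lambda>_. n" and c = "\<lambda>_. c" and d = "\<lambda>_. d", OF transfer]
    by simp
qed

lemma agreeing_labelling_family:
  assumes "\<And>C. C \<in> cycle_sets (nbhd_edges G X) \<Longrightarrow> \<not> C \<subseteq> X"
  obtains len c d where "\<And>C. C \<in> cycle_sets (nbhd_edges G X) \<Longrightarrow>
    agreeing_labellings (len C) (c C) (d C) \<and> range (c C) = C \<and> c C 0 \<notin> X"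
proof -
  have "\<exists>n c d. agreeing_labellings n c d \<and> range c = C \<and> c 0 \<notin> X"
    if C: "C \<in> cycle_sets (nbhd_edges G X)" for C
  proof -
    obtain b where "b \<in> C" "b \<notin> X"
      using assms[OF C] by blast
    from agreeing_labellings_through[OF C this] obtain n c d
      where "agreeing_labellings n c d" "range c = C" "c 0 \<notin> X" .
    then show ?thesis
      by blast
  qed
  then show ?thesis
    using that by metis
qed

lemma nbhd_iso_cycles_outside_X:
  assumes "\<And>C. C \<in> cycle_sets (nbhd_edges G X) \<Longrightarrow> \<not> C \<subseteq> X"
  obtains f where "bij f" "\<And>v. v \<notin> X \<Longrightarrow> f v = v"
    "\<And>u v. nbhd_edges G X u v \<longleftrightarrow> nbhd_edges H X (f u) (f v)"
proof -
  obtain len c d where lab: "\<And>C. C \<in> cycle_sets (nbhd_edges G X) \<Longrightarrow>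
      agreeing_labellings (len C) (c C) (d C) \<and> range (c C) = C \<and> c C 0 \<notin> X"
    using agreeing_labelling_family[OF assms] by blast
  have lab_G: "\<forall>C\<in>cycle_sets (nbhd_edges G X). cycle_labelling (nbhd_edges G X) (len C) (c C)"
    and lab_H: "\<forall>C\<in>cycle_sets (nbhd_edges G X). cycle_labelling (nbhd_edges H X) (len C) (d C)"
    and ranges: "\<forall>C\<in>cycle_sets (nbhd_edges G X). range (c C) = C"
    using lab by (simp_all add: agreeing_labellings_def)
  have disj: "\<forall>C\<in>cycle_sets (nbhd_edges G X). \<forall>D\<in>cycle_sets (nbhd_edges G X).
      C \<noteq> D \<longrightarrow> range (d C) \<inter> range (d D) = {}"
    using lab agreeing_labellings_disjoint by metis
  note transfer = two_regular_G two_regular_H partition_on_cycle_sets[OF two_regular_G]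
    lab_G lab_H ranges disj
  define f where "f = cycle_transfer (cycle_sets (nbhd_edges G X)) c d"
  note f = cycle_transfer_label[OF transfer, folded f_def]
    cycle_transfer_outside[OF transfer, folded f_def]
    bij_cycle_transfer[OF transfer, folded f_def] cycle_transfer_iso[OF transfer, folded f_def]
  have "f v = v" if "v \<notin> X" for v
  proof (cases "v \<in> nbhd_vertices G X")
    case True
    then obtain C where C: "C \<in> cycle_sets (nbhd_edges G X)" "v \<in> C"
      using partition_on_cycle_sets[OF two_regular_G] unfolding partition_on_def by blast
    then obtain i where "v = c C i"
      using ranges by blast
    then show ?thesis
      using lab[OF C(1)] f(1)[OF C(1)] that by (simp add: agreeing_labellings_def)
  qed (rule f(2))
  then show ?thesis
    using that f(3,4) by simp
qed

lemma graph_iso_G_H: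
  assumes "connected_graph G"
  shows "graph_iso G H"
proof -
  obtain f where f: "bij f" "\<And>v. v \<notin> X \<Longrightarrow> f v = v"
    "\<And>u v. nbhd_edges G X u v \<longleftrightarrow> nbhd_edges H X (f u) (f v)"
  proof (cases "\<exists>C\<in>cycle_sets (nbhd_edges G X). C \<subseteq> X")
    case True
    then obtain C where "C \<in> cycle_sets (nbhd_edges G X)" "C \<subseteq> X"
      by blast
    then show ?thesis
      using nbhd_iso_cycle_inside_X[OF assms] that by metis
  next
    case False
    then show ?thesis
      using nbhd_iso_cycles_outside_X that by metis
  qed
  have f_X: "f v \<in> X" if "v \<in> X" for v
  proof (rule ccontr)
    assume "f v \<notin> X"
    then have "f (f v) = f v"
      by (rule f(2))
    then have "f v = v"
      using bij_is_inj[OF f(1)] by (simp add: inj_eq)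
    then show False
      using that \<open>f v \<notin> X\<close> by simp
  qed
  have "G u v \<longleftrightarrow> H (f u) (f v)" for u v
  proof (cases "u \<in> X \<or> v \<in> X")
    case True
    then have "f u \<in> X \<or> f v \<in> X"
      using f_X by blast
    then show ?thesis
      using f(3)[of u v] True by (simp add: nbhd_edges_def)
  next
    case False
    then show ?thesis
      using f(2)[of u] f(2)[of v] H_iff_G_outside(1)[of u v] by simp
  qed
  then show ?thesis
    using f(1) unfolding graph_iso_def by blast
qed

end

theorem lemma3p10:
  fixes G H :: "'v::finite \<Rightarrow> 'v \<Rightarrow> bool" and X :: "'v set"
  assumes "simple_graph G" and "connected_graph G"
    and "q_switching G X H"
    and "disjoint_union_of_cycles (nbhd_vertices G X) (nbhd_edges G X)"
  shows "graph_iso G H"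
proof -
  obtain M where "switching_matrix X M" "adj_mat H = transpose M ** adj_mat G ** M"
    and "simple_graph H"
    using assms(3) unfolding q_switching_def switching_matrix_def
    by (elim conjE exE) (rule that; (intro switching_matrix.intro)?; auto)
  then interpret q_switched_nbhd_cycles X M G H
    using assms(1,4) by (simp add: q_switched_nbhd_cycles_def q_switched_graphs_def
        q_switched_graphs_axioms_def q_switched_nbhd_cycles_axioms_def)
  show ?thesis
    by (rule graph_iso_G_H[OF assms(2)])
qed

end
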